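(* There exists a probability density $f$ supported on $[0,\infty)$ such that $f\in\mathcal{S}_0$ and $f$ is not almost decreasing.
   Context: For a probability density $f$ on $[0,\infty)$: $f\in\mathcal{L}_0$ (long-tailed density) if $f(x)>0$ for all sufficiently large $x$ and for every constant $t\in\mathbb{R}$, $f(x+t)\sim f(x)$ as $x\to\infty$ (where $a(x)\sim b(x)$ means $a(x)/b(x)\to1$). $f\in\mathcal{S}_0$ (subexponential density) if $f\in\mathcal{L}_0$ and $\int_0^x f(x-y)f(y)\,dy\sim 2f(x)$ as $x\to\infty$. The density $f$ is called almost decreasing if there exists a constant $x_0\ge 0$ such that $f(x)>0$ for all $x\ge x_0$ and $\sup_{x_0\le x\le y<\infty} f(y)/f(x)<\infty$. *)

theory Defs
  imports "HOL-Analysis.Analysis"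
begin

definition prob_density_nonneg :: "(real \<Rightarrow> real) \<Rightarrow> bool" where
  "prob_density_nonneg f \<longleftrightarrow>
     f \<in> borel_measurable lborel \<and> (\<forall>x. 0 \<le> f x) \<and> (\<forall>x<0. f x = 0) \<and>
     integrable lborel f \<and> (\<integral>x. f x \<partial>lborel) = 1"

definition long_tailed_density :: "(real \<Rightarrow> real) \<Rightarrow> bool" where
  "long_tailed_density f \<longleftrightarrow>
     (\<forall>\<^sub>F x in at_top. f x > 0) \<and>
     (\<forall>t::real. ((\<lambda>x. f (x + t) / f x) \<longlongrightarrow> 1) at_top)"

definition conv0 :: "(real \<Rightarrow> real) \<Rightarrow> real \<Rightarrow> real" where
  "conv0 f x = (LBINT y:{0..x}. f (x - y) * f y)"

text \<open>Subexponential density. We additionally require the convolution integrand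
  to be integrable on [0,x] for large x, so that the Bochner integral is the genuine one.\<close>
definition subexp_density :: "(real \<Rightarrow> real) \<Rightarrow> bool" where
  "subexp_density f \<longleftrightarrow> long_tailed_density f \<and>
     (\<forall>\<^sub>F x in at_top. set_integrable lborel {0..x} (\<lambda>y. f (x - y) * f y)) \<and>
     ((\<lambda>x. conv0 f x / (2 * f x)) \<longlongrightarrow> 1) at_top"

definition almost_decreasing :: "(real \<Rightarrow> real) \<Rightarrow> bool" where
  "almost_decreasing f \<longleftrightarrow>
     (\<exists>x0\<ge>0. (\<forall>x\<ge>x0. f x > 0) \<and>
        (\<exists>C. \<forall>x y. x0 \<le> x \<longrightarrow> x \<le> y \<longrightarrow> f y / f x \<le> C))"

end

theory Submission
  imports Defs
begin

text \<open>
  Write the density as \<open>f(x) = c exp(\<phi>(ln(1 + x)))\<close> with \<open>\<phi>\<close> Lipschitz and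
  \<open>\<phi>(L) \<le> -2L\<close>. Lipschitz continuity on the logarithmic scale gives \<open>f(x + t)/f(x) \<rightarrow> 1\<close>
  and a uniform bound \<open>f(x - y) \<le> 2\<^sup>K f(x)\<close> for \<open>0 \<le> y \<le> x/2\<close>; splitting the
  convolution at \<open>x/2\<close> and applying dominated convergence to each half then yields
  \<open>f * f(x) \<sim> 2 f(x)\<close>. Taking \<open>\<phi>(L) = -(9 + sin(10\<pi> ln(1 + L)))/4 \<cdot> L\<close>, the local
  tail index of \<open>f\<close> oscillates between 2 and 5/2 along \<open>ln ln x\<close>, slowly enough to keep \<open>\<phi>\<close>
  Lipschitz, but each passage from index 5/2 back to 2 multiplies \<open>f\<close> by an unbounded factor,
  so \<open>f\<close> is not almost decreasing.
\<close>

section \<open>A criterion for subexponential densities\<close>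

lemma conv0_eq_twice_half:
  fixes f :: "real \<Rightarrow> real"
  assumes [measurable]: "f \<in> borel_measurable borel"
    and int: "set_integrable lborel {0..x} (\<lambda>y. f (x - y) * f y)"
  shows "conv0 f x = 2 * (LBINT y:{0..<x/2}. f (x - y) * f y)"
proof -
  let ?G = "\<lambda>y. f (x - y) * f y"
  have int_lower: "set_integrable lborel {0..<x/2} ?G" and int_upper: "set_integrable lborel {x/2..x} ?G"
    by (auto intro: set_integrable_subset[OF int])
  have "{0..x} = {0..<x/2} \<union> {x/2..x}"
    by (cases "0 \<le> x") auto
  then have "conv0 f x = (LBINT y:{0..<x/2} \<union> {x/2..x}. ?G y)"
    unfolding conv0_def by simp
  also have "\<dots> = (LBINT y:{0..<x/2}. ?G y) + (LBINT y:{x/2..x}. ?G y)"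
    by (rule set_integral_Un[OF _ int_lower int_upper]) auto
  also have "(LBINT y:{x/2..x}. ?G y) = (LBINT y:{0..x/2}. ?G y)"
    unfolding set_lebesgue_integral_def
    by (subst lborel_integral_real_affine[where c = "-1" and t = x])
       (auto intro!: Bochner_Integration.integral_cong simp: indicator_def)
  also have "\<dots> = (LBINT y:{0..<x/2}. ?G y)"
  proof (rule set_integral_cong_set)
    show "AE y in lborel. y \<in> {0..<x/2} \<longleftrightarrow> y \<in> {0..x/2}"
      using AE_lborel_singleton[of "x/2"] by eventually_elim auto
  qed (auto simp: set_borel_measurable_def)
  finally show ?thesis by simp
qed

lemma half_convolution_ratio_tendsto:
  fixes f :: "real \<Rightarrow> real"
  assumes dens: "prob_density_nonneg f" and tail: "long_tailed_density f"
    and bound: "\<forall>\<^sub>F x in at_top. \<forall>y\<in>{0..x/2}. f (x - y) \<le> C * f x"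
  shows "((\<lambda>x. (LBINT y:{0..<x/2}. f (x - y) * f y) / f x) \<longlongrightarrow> 1) at_top"
proof -
  have [measurable]: "f \<in> borel_measurable borel" and f_nonneg: "\<And>y. 0 \<le> f y"
    and f_neg: "\<And>y. y < 0 \<Longrightarrow> f y = 0" and f_int: "integrable lborel f"
    and f_total: "(\<integral>y. f y \<partial>lborel) = 1"
    using dens by (auto simp: prob_density_nonneg_def)
  have f_pos: "\<forall>\<^sub>F x in at_top. f x > 0"
    and f_shift: "\<And>t. ((\<lambda>x. f (x + t) / f x) \<longlongrightarrow> 1) at_top"
    using tail by (auto simp: long_tailed_density_def)
  let ?s = "\<lambda>x y. indicator {0..<x/2} y * (f (x - y) / f x * f y)"
  have lim: "((\<lambda>x. \<integral>y. ?s x y \<partial>lborel) \<longlongrightarrow> (\<integral>y. f y \<partial>lborel)) at_top"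
  proof (rule integral_dominated_convergence_at_top[where w = "\<lambda>y. C * f y"])
    show "integrable lborel (\<lambda>y. C * f y)" using f_int by simp
    show "AE y in lborel. ((\<lambda>x. ?s x y) \<longlongrightarrow> f y) at_top"
    proof (rule AE_I2)
      fix y :: real
      show "((\<lambda>x. ?s x y) \<longlongrightarrow> f y) at_top"
      proof (cases "y < 0")
        case True
        then show ?thesis by (simp add: f_neg)
      next
        case False
        have "((\<lambda>x. f (x + - y) / f x * f y) \<longlongrightarrow> f y) at_top"
          using tendsto_mult[OF f_shift tendsto_const, of "- y" "f y"] by simp
        moreover have "\<forall>\<^sub>F x in at_top. f (x + - y) / f x * f y = ?s x y"
          using False by (intro eventually_at_top_linorderI[of "2 * y + 1"]) auto
        ultimately show ?thesis by (rule Lim_transform_eventually)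
      qed
    qed
    show "\<forall>\<^sub>F x in at_top. AE y in lborel. norm (?s x y) \<le> C * f y"
      using bound f_pos eventually_ge_at_top[of 0]
    proof eventually_elim
      case (elim x)
      then have "0 < C * f x" by force
      then have C_nonneg: "0 \<le> C" using elim by (simp add: zero_less_mult_iff)
      have "norm (?s x y) \<le> C * f y" for y
      proof (cases "y \<in> {0..<x/2}")
        case True
        then have "f (x - y) / f x \<le> C" using elim by (simp add: divide_le_eq)
        then have "f (x - y) / f x * f y \<le> C * f y"
          by (rule mult_right_mono) (rule f_nonneg)
        then show ?thesis
          using True elim f_nonneg[of y] f_nonneg[of "x - y"] by simp
      qed (use f_nonneg C_nonneg in simp)
      then show ?case by simp
    qed
  qed simp_all
  have eq: "(\<integral>y. ?s x y \<partial>lborel) = (LBINT y:{0..<x/2}. f (x - y) * f y) / f x" for x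
    unfolding set_lebesgue_integral_def integral_divide_zero[symmetric]
    by (rule Bochner_Integration.integral_cong) auto
  show ?thesis using lim unfolding eq f_total .
qed

lemma set_integrable_convolution:
  fixes f :: "real \<Rightarrow> real"
  assumes "continuous_on {0..} f"
  shows "set_integrable lborel {0..x} (\<lambda>y. f (x - y) * f y)"
proof -
  have "continuous_on {0..x} (\<lambda>y. f (x - y))"
    by (rule continuous_on_compose2[OF assms continuous_on_diff[OF continuous_on_const continuous_on_id]]) auto
  moreover have "continuous_on {0..x} f"
    by (rule continuous_on_subset[OF assms]) auto
  ultimately show ?thesis
    unfolding set_integrable_def by (intro borel_integrable_compact continuous_intros) auto
qed

lemma subexp_densityI:
  fixes f :: "real \<Rightarrow> real"
  assumes dens: "prob_density_nonneg f" and tail: "long_tailed_density f"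
    and cont: "continuous_on {0..} f"
    and bound: "\<forall>\<^sub>F x in at_top. \<forall>y\<in>{0..x/2}. f (x - y) \<le> C * f x"
  shows "subexp_density f"
proof -
  have [measurable]: "f \<in> borel_measurable borel"
    using dens by (simp add: prob_density_nonneg_def)
  have "conv0 f x / (2 * f x) = (LBINT y:{0..<x/2}. f (x - y) * f y) / f x" for x
    using conv0_eq_twice_half[OF _ set_integrable_convolution[OF cont]] by simp
  then show ?thesis
    using half_convolution_ratio_tendsto[OF dens tail bound] tail set_integrable_convolution[OF cont]
    by (simp add: subexp_density_def)
qed

section \<open>Densities with a Lipschitz logarithmic profile\<close>

lemma ln_shift_tendsto_zero:
  fixes t :: real
  shows "((\<lambda>x. ln (1 + (x + t)) - ln (1 + x)) \<longlongrightarrow> 0) at_top"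
proof -
  have "filterlim (\<lambda>x::real. 1 + x) at_infinity at_top"
    by (intro filterlim_at_top_imp_at_infinity filterlim_tendsto_add_at_top[OF tendsto_const filterlim_ident])
  then have "((\<lambda>x. ln (1 + t / (1 + x))) \<longlongrightarrow> ln (1 + 0)) at_top"
    by (intro tendsto_ln tendsto_add tendsto_const tendsto_divide_0[OF tendsto_const]) auto
  moreover have "\<forall>\<^sub>F x in at_top. ln (1 + t / (1 + x)) = ln (1 + (x + t)) - ln (1 + x)"
  proof (rule eventually_at_top_linorderI[of "\<bar>t\<bar>"])
    fix x assume "\<bar>t\<bar> \<le> x"
    then have "1 + t / (1 + x) = (1 + (x + t)) / (1 + x)" and "0 < 1 + (x + t)" and "0 < 1 + x"
      by (auto simp: field_simps)
    then show "ln (1 + t / (1 + x)) = ln (1 + (x + t)) - ln (1 + x)"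
      by (simp add: ln_div)
  qed
  ultimately show ?thesis by (simp add: Lim_transform_eventually)
qed

lemma integrable_inverse_square_shifted:
  "integrable lborel (\<lambda>x::real. indicator {0..} x / (1 + x)^2)"
proof -
  have "(\<lambda>x::real. 1 / x^2) integrable_on {1..}"
    using has_integral_inverse_power_to_inf[of 2 1] by (auto simp: integrable_on_def)
  then have "(\<lambda>x::real. 1 / x^2) absolutely_integrable_on {1..}"
    by (subst absolutely_integrable_on_iff_nonneg) auto
  then have "integrable lborel (\<lambda>x::real. indicator {1..} x * (1 / x^2))"
    unfolding set_integrable_def by (simp add: integrable_completion)
  then have "integrable lborel (\<lambda>x::real. indicator {1..} (1 + 1 * x) * (1 / (1 + 1 * x)^2))"
    by (rule lborel_integrable_real_affine) simp
  then show ?thesis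
    by (simp add: indicator_def)
qed

locale log_lipschitz_profile =
  fixes \<phi> :: "real \<Rightarrow> real" and K :: real
  assumes lipschitz: "K-lipschitz_on {0..} \<phi>"
    and decay: "\<And>L. 0 \<le> L \<Longrightarrow> \<phi> L \<le> -2 * L"
begin

definition weight :: "real \<Rightarrow> real" where
  "weight x = indicator {0..} x * exp (\<phi> (ln (1 + x)))"

definition pdf :: "real \<Rightarrow> real" where
  "pdf x = weight x / integral\<^sup>L lborel weight"

lemma K_nonneg: "0 \<le> K"
  using lipschitz by (rule lipschitz_on_nonneg)

lemma profile_diff_le:
  assumes "0 \<le> a" "0 \<le> b"
  shows "\<bar>\<phi> (ln (1 + b)) - \<phi> (ln (1 + a))\<bar> \<le> K * \<bar>ln (1 + b) - ln (1 + a)\<bar>"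
  using lipschitz_onD[OF lipschitz, of "ln (1 + b)" "ln (1 + a)"] assms by (simp add: dist_real_def)

lemma continuous_on_exp_profile: "continuous_on {0..} (\<lambda>x. exp (\<phi> (ln (1 + x))))"
proof -
  have ln_cont: "continuous_on {0..} (\<lambda>x::real. ln (1 + x))"
    by (intro continuous_intros) auto
  have "continuous_on {0..} (\<lambda>x. \<phi> (ln (1 + x)))"
    using lipschitz_on_continuous_on[OF lipschitz] ln_cont by (rule continuous_on_compose2) auto
  then show ?thesis
    by (rule continuous_on_exp)
qed

lemma continuous_on_weight: "continuous_on {0..} weight"
  using continuous_on_exp_profile
  by (rule continuous_on_cong[THEN iffD1, rotated 2]) (auto simp: weight_def)

lemma weight_le: "weight x \<le> indicator {0..} x / (1 + x)^2"
proof (cases "0 \<le> x")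
  case True
  then have "exp (\<phi> (ln (1 + x))) \<le> exp (- (2 * ln (1 + x)))"
    using decay[of "ln (1 + x)"] by simp
  also have "\<dots> = 1 / (1 + x)^2"
    using True by (simp add: exp_minus exp_double inverse_eq_divide)
  finally show ?thesis using True by (simp add: weight_def)
qed (simp add: weight_def)

lemma weight_nonneg: "0 \<le> weight x"
  by (simp add: weight_def)

lemma borel_measurable_weight [measurable]: "weight \<in> borel_measurable borel"
  using borel_measurable_continuous_on_indicator[OF _ continuous_on_exp_profile]
  unfolding weight_def[abs_def] by simp

lemma integrable_weight: "integrable lborel weight"
proof (rule Bochner_Integration.integrable_bound[OF integrable_inverse_square_shifted])
  show "AE x in lborel. norm (weight x) \<le> norm (indicator {0..} x / (1 + x)^2)"
    using weight_le weight_nonneg by simp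
qed simp

lemma weight_integral_pos: "0 < integral\<^sup>L lborel weight"
proof -
  have "integral\<^sup>L lborel weight \<noteq> 0"
  proof
    assume "integral\<^sup>L lborel weight = 0"
    then have "AE x in lborel. weight x = 0"
      using integral_nonneg_eq_0_iff_AE[OF integrable_weight] weight_nonneg by auto
    then have "AE x in lborel. x \<notin> {0..1::real}"
      by eventually_elim (auto simp: weight_def)
    then have "emeasure lborel {0..1::real} = 0"
      by (subst (asm) AE_iff_measurable[of "{0..1}"]) auto
    then show False by simp
  qed
  moreover have "0 \<le> integral\<^sup>L lborel weight"
    using weight_nonneg by (intro integral_nonneg_AE) auto
  ultimately show ?thesis by simp
qed

lemma pdf_nonneg: "0 \<le> pdf x"
  using weight_nonneg[of x] weight_integral_pos by (simp add: pdf_def)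

lemma pdf_pos: "0 \<le> x \<Longrightarrow> 0 < pdf x"
  using weight_integral_pos by (simp add: pdf_def weight_def)

lemma pdf_ratio:
  "0 \<le> a \<Longrightarrow> 0 \<le> b \<Longrightarrow> pdf b / pdf a = exp (\<phi> (ln (1 + b)) - \<phi> (ln (1 + a)))"
  using weight_integral_pos by (simp add: pdf_def weight_def exp_diff)

lemma prob_density_pdf: "prob_density_nonneg pdf"
  unfolding prob_density_nonneg_def
proof (intro conjI allI impI)
  show "pdf \<in> borel_measurable lborel"
    unfolding pdf_def[abs_def] by measurable
  show "integrable lborel pdf"
    unfolding pdf_def[abs_def] using integrable_weight by (rule integrable_divide_zero)
  show "(\<integral>x. pdf x \<partial>lborel) = 1"
    using weight_integral_pos by (simp add: pdf_def)
qed (auto simp: pdf_nonneg pdf_def weight_def)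

lemma long_tailed_pdf: "long_tailed_density pdf"
  unfolding long_tailed_density_def
proof (intro conjI allI)
  show "\<forall>\<^sub>F x in at_top. 0 < pdf x"
    using eventually_ge_at_top[of 0] by eventually_elim (rule pdf_pos)
  fix t :: real
  have "\<forall>\<^sub>F x in at_top. norm (\<phi> (ln (1 + (x + t))) - \<phi> (ln (1 + x)))
          \<le> K * \<bar>ln (1 + (x + t)) - ln (1 + x)\<bar>"
    using eventually_ge_at_top[of "\<bar>t\<bar>"] by eventually_elim (simp add: profile_diff_le)
  moreover have "((\<lambda>x. K * \<bar>ln (1 + (x + t)) - ln (1 + x)\<bar>) \<longlongrightarrow> 0) at_top"
    using tendsto_mult_right_zero[OF tendsto_rabs_zero[OF ln_shift_tendsto_zero]] .
  ultimately have "((\<lambda>x. \<phi> (ln (1 + (x + t))) - \<phi> (ln (1 + x))) \<longlongrightarrow> 0) at_top"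
    by (rule Lim_null_comparison)
  then have "((\<lambda>x. exp (\<phi> (ln (1 + (x + t))) - \<phi> (ln (1 + x)))) \<longlongrightarrow> 1) at_top"
    using tendsto_exp by fastforce
  moreover have "\<forall>\<^sub>F x in at_top. exp (\<phi> (ln (1 + (x + t))) - \<phi> (ln (1 + x))) = pdf (x + t) / pdf x"
    using eventually_ge_at_top[of "\<bar>t\<bar>"] by eventually_elim (simp add: pdf_ratio)
  ultimately show "((\<lambda>x. pdf (x + t) / pdf x) \<longlongrightarrow> 1) at_top"
    by (rule Lim_transform_eventually)
qed

lemma continuous_on_pdf: "continuous_on {0..} pdf"
  unfolding pdf_def[abs_def]
  by (rule continuous_on_divide[OF continuous_on_weight continuous_on_const])
     (use weight_integral_pos in auto)

lemma pdf_reflect_le: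
  assumes "0 \<le> y" "y \<le> x / 2"
  shows "pdf (x - y) \<le> 2 powr K * pdf x"
proof -
  have "ln (1 + x) \<le> ln (2 * (1 + (x - y)))"
    using assms by simp
  also have "\<dots> = ln 2 + ln (1 + (x - y))"
    using assms by (intro ln_mult_pos) auto
  finally have ln_gap: "\<bar>ln (1 + (x - y)) - ln (1 + x)\<bar> \<le> ln 2"
    using assms by simp
  have "\<phi> (ln (1 + (x - y))) - \<phi> (ln (1 + x)) \<le> K * \<bar>ln (1 + (x - y)) - ln (1 + x)\<bar>"
    using profile_diff_le[of x "x - y"] assms by simp
  also have "\<dots> \<le> K * ln 2"
    using ln_gap K_nonneg by (rule mult_left_mono)
  finally have "pdf (x - y) / pdf x \<le> exp (K * ln 2)"
    using assms by (simp add: pdf_ratio)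
  then show ?thesis
    using pdf_pos[of x] assms by (simp add: powr_def divide_le_eq mult.commute)
qed

lemma subexp_density_pdf: "subexp_density pdf"
  using prob_density_pdf long_tailed_pdf continuous_on_pdf
proof (rule subexp_densityI)
  show "\<forall>\<^sub>F x in at_top. \<forall>y\<in>{0..x/2}. pdf (x - y) \<le> 2 powr K * pdf x"
    by (simp add: pdf_reflect_le)
qed

lemma not_almost_decreasing_pdf:
  assumes rises: "\<And>L\<^sub>0 M. \<exists>L L'. L\<^sub>0 \<le> L \<and> L \<le> L' \<and> M < \<phi> L' - \<phi> L"
  shows "\<not> almost_decreasing pdf"
proof
  assume "almost_decreasing pdf"
  then obtain x\<^sub>0 C where "0 \<le> x\<^sub>0"
    and C: "\<And>x y. x\<^sub>0 \<le> x \<Longrightarrow> x \<le> y \<Longrightarrow> pdf y / pdf x \<le> C"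
    unfolding almost_decreasing_def by blast
  obtain L L' where L: "ln (1 + x\<^sub>0) \<le> L" "L \<le> L'" and rise: "\<bar>C\<bar> < \<phi> L' - \<phi> L"
    using rises by blast
  define x y where "x = exp L - 1" and "y = exp L' - 1"
  have "1 + x\<^sub>0 \<le> exp L"
    using exp_le_cancel_iff[of "ln (1 + x\<^sub>0)" L] L(1) \<open>0 \<le> x\<^sub>0\<close> by simp
  then have "x\<^sub>0 \<le> x" "x \<le> y"
    using L(2) by (simp_all add: x_def y_def)
  have "0 \<le> L"
    using L(1) \<open>0 \<le> x\<^sub>0\<close> ln_ge_zero[of "1 + x\<^sub>0"] by linarith
  then have ratio: "pdf y / pdf x = exp (\<phi> L' - \<phi> L)"
    using pdf_ratio[of x y] L(2) by (simp add: x_def y_def)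
  have "exp \<bar>C\<bar> < exp (\<phi> L' - \<phi> L)"
    using rise by simp
  also have "\<dots> = pdf y / pdf x"
    by (rule ratio[symmetric])
  also have "\<dots> \<le> C"
    using C \<open>x\<^sub>0 \<le> x\<close> \<open>x \<le> y\<close> .
  finally show False
    using exp_ge_add_one_self[of "\<bar>C\<bar>"] by linarith
qed

end

section \<open>An oscillating profile\<close>

definition osc_index :: "real \<Rightarrow> real" where
  "osc_index L = (9 + sin (10 * pi * ln (1 + L))) / 4"

definition osc_profile :: "real \<Rightarrow> real" where
  "osc_profile L = - osc_index L * L"

lemma osc_index_bounds: "2 \<le> osc_index L" "osc_index L \<le> 5/2"
proof -
  have bounds: "2 \<le> (9 + s) / 4 \<and> (9 + s) / 4 \<le> 5/2" if "-1 \<le> s" "s \<le> 1" for s :: real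
    using that by simp
  show "2 \<le> osc_index L" "osc_index L \<le> 5/2"
    using bounds[OF sin_ge_minus_one sin_le_one] unfolding osc_index_def by blast+
qed

lemma osc_profile_le: "0 \<le> L \<Longrightarrow> osc_profile L \<le> -2 * L"
  unfolding osc_profile_def using osc_index_bounds(1) by (intro mult_right_mono) auto

definition osc_profile_deriv :: "real \<Rightarrow> real" where
  "osc_profile_deriv L = - (cos (10 * pi * ln (1 + L)) * 10 * pi * L / (4 * (1 + L))) - osc_index L"

lemma osc_profile_has_derivative:
  "0 \<le> L \<Longrightarrow> (osc_profile has_real_derivative osc_profile_deriv L) (at L)"
  unfolding osc_profile_def osc_profile_deriv_def osc_index_def
  by (auto intro!: derivative_eq_intros simp: field_simps)

lemma osc_profile_deriv_bound:
  assumes "0 \<le> L"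
  shows "\<bar>osc_profile_deriv L\<bar> \<le> 5 * pi / 2 + 5 / 2"
proof -
  define a where "a = cos (10 * pi * ln (1 + L)) * 10 * pi * L / (4 * (1 + L))"
  have "\<bar>cos (10 * pi * ln (1 + L))\<bar> * (10 * pi * L) \<le> 1 * (10 * pi * (1 + L))"
    using assms by (intro mult_mono) auto
  then have "\<bar>a\<bar> \<le> 5/2 * pi"
    using assms by (simp add: a_def abs_mult divide_le_eq)
  moreover have "\<bar>- a - osc_index L\<bar> \<le> \<bar>a\<bar> + osc_index L"
    using abs_triangle_ineq4[of "- a" "osc_index L"] osc_index_bounds(1)[of L] by simp
  ultimately show ?thesis
    using osc_index_bounds(2)[of L] unfolding osc_profile_deriv_def a_def[symmetric] by linarith
qed

lemma lipschitz_osc_profile: "(5 * pi / 2 + 5 / 2)-lipschitz_on {0..} osc_profile"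
proof (rule lipschitz_onI)
  fix L L' :: real
  assume "L \<in> {0..}" "L' \<in> {0..}"
  then have "norm (osc_profile L - osc_profile L') \<le> (5 * pi / 2 + 5 / 2) * norm (L - L')"
    by (intro field_differentiable_bound[where S = "{0..}" and f' = osc_profile_deriv])
       (auto intro: has_field_derivative_at_within osc_profile_has_derivative osc_profile_deriv_bound)
  then show "dist (osc_profile L) (osc_profile L') \<le> (5 * pi / 2 + 5 / 2) * dist L L'"
    by (simp add: dist_real_def)
qed simp

lemma osc_profile_rises: "\<exists>L L'. L\<^sub>0 \<le> L \<and> L \<le> L' \<and> M < osc_profile L' - osc_profile L"
proof -
  define B where "B = max L\<^sub>0 (4 * M + 1)"
  obtain n :: nat where n: "5 * B < real n"
    using reals_Archimedean2 by blast
  define v where "v = real n / 5 + 1/20"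
  define L L' where "L = exp v - 1" and "L' = exp (v + 1/10) - 1"
  \<comment> \<open>\<open>osc_index\<close> is 5/2 at \<open>L\<close> and 2 at \<open>L'\<close>, while \<open>1 + L' = exp(1/10) (1 + L)\<close> and
    \<open>2 exp(1/10) < 5/2\<close>: the rise is of order \<open>exp v\<close>.\<close>
  have "10 * pi * v = 2 * real n * pi + pi / 2"
    by (simp add: v_def field_simps)
  then have sin_v: "sin (10 * pi * v) = 1"
    by (simp add: sin_add)
  then have osc_L: "osc_profile L = -5/2 * L"
    by (simp add: osc_profile_def osc_index_def L_def)
  have "sin (10 * pi * (v + 1/10)) = -1"
    using sin_v by (simp add: distrib_left sin_add)
  then have osc_L': "osc_profile L' = -2 * L'"
    by (simp add: osc_profile_def osc_index_def L'_def)
  have "exp (1/10::real) \<le> 10/9"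
    using exp_minus_ge[of "1/10"] by (simp add: exp_minus field_simps)
  then have "exp v * exp (1/10) \<le> exp v * (10/9)"
    by (intro mult_left_mono) auto
  then have "L' \<le> exp v * (10/9) - 1"
    unfolding L'_def exp_add by linarith
  then have "exp v / 4 - 1/2 \<le> osc_profile L' - osc_profile L"
    unfolding osc_L osc_L' using L_def exp_gt_zero[of v] by linarith
  moreover have "B < v"
    using n unfolding v_def by linarith
  moreover have "L\<^sub>0 \<le> B" "4 * M + 1 \<le> B"
    by (simp_all add: B_def)
  moreover have "1 + v \<le> exp v"
    by (rule exp_ge_add_one_self)
  ultimately have "L\<^sub>0 < L" "M < osc_profile L' - osc_profile L"
    using L_def by linarith+
  moreover have "L \<le> L'"
    by (simp add: L_def L'_def)
  ultimately show ?thesis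
    by (intro exI[of _ L] exI[of _ L']) simp
qed

interpretation osc: log_lipschitz_profile osc_profile "5 * pi / 2 + 5 / 2"
  by unfold_locales (fact lipschitz_osc_profile, fact osc_profile_le)

theorem proposition1p1:
  shows "\<exists>f :: real \<Rightarrow> real. prob_density_nonneg f \<and> subexp_density f \<and> \<not> almost_decreasing f"
proof (intro exI conjI)
  show "prob_density_nonneg osc.pdf"
    by (rule osc.prob_density_pdf)
  show "subexp_density osc.pdf"
    by (rule osc.subexp_density_pdf)
  show "\<not> almost_decreasing osc.pdf"
    using osc_profile_rises by (rule osc.not_almost_decreasing_pdf)
qed

end
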